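(* Let $\mathbf{A}$ be a structure such that there exists a retraction $r:\mathbf{A}\twoheadrightarrow\mathbf{A}^2$. Then $\operatorname{rank}(\operatorname{Pol}\mathbf{A}:\operatorname{End}\mathbf{A})=1$. More precisely, if $\epsilon:\mathbf{A}^2\hookrightarrow\mathbf{A}$ is a homomorphism with $r\circ\epsilon=1_{\mathbf{A}^2}$, then $\operatorname{Pol}\mathbf{A}$ is generated as a clone by $\operatorname{End}\mathbf{A}\cup\{\epsilon\}$, while $\operatorname{End}\mathbf{A}$ alone does not generate $\operatorname{Pol}\mathbf{A}$.
   Context: For a set $A$, $O_A^{(n)}$ is the set of functions $A^n\to A$, $O_A=\bigcup_{n\ge1}O_A^{(n)}$, projections are $e_i^n(x_1,\dots,x_n)=x_i$, and for $f\in O_A^{(n)}$, $g_1,\dots,g_n\in O_A^{(m)}$, $f\circ\langle g_1,\dots,g_n\rangle(\bar x)=f(g_1(\bar x),\dots,g_n(\bar x))$. A clone on $A$ is a subset of $O_A$ containing all projections and closed under this composition; $\langle M\rangle_{O_A}$ is the clone generated by $M\subseteq O_A$. For a structure $\mathbf{A}$, $\operatorname{Pol}\mathbf{A}$ is the clone of all homomorphisms $\mathbf{A}^n\to\mathbf{A}$ ($n\ge1$, $\mathbf{A}^n$ the direct power), and $\operatorname{End}\mathbf{A}$ is its unary part (the endomorphisms). For a clone $F$ and $M\subseteq F$, the relative rank $\operatorname{rank}(F:M)$ is the least cardinality of a set $N\subseteq F$ with $\langle M\cup N\rangle_{O_A}=F$. A homomorphism $r:\mathbf{A}\to\mathbf{B}$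 is a retraction if some homomorphism $\iota:\mathbf{B}\to\mathbf{A}$ (a section) satisfies $r\circ\iota=1_{\mathbf{B}}$. *)

theory Defs
  imports Main "HOL-Library.Extended_Nat"
begin

record ('a, 'r, 'f) struct =
  carrier :: "'a set"
  rar :: "'r \<Rightarrow> nat"
  rel_of :: "'r \<Rightarrow> 'a list set"
  far :: "'f \<Rightarrow> nat"
  fun_of :: "'f \<Rightarrow> 'a list \<Rightarrow> 'a"

definition tuples :: "'a set \<Rightarrow> nat \<Rightarrow> 'a list set" where
  "tuples S n = {xs. length xs = n \<and> set xs \<subseteq> S}"

definition wf_struct :: "('a, 'r, 'f) struct \<Rightarrow> bool" where
  "wf_struct A \<longleftrightarrow>
     (\<forall>R. rel_of A R \<subseteq> tuples (carrier A) (rar A R)) \<and>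
     (\<forall>F. \<forall>xs \<in> tuples (carrier A) (far A F). fun_of A F xs \<in> carrier A)"

definition power :: "('a, 'r, 'f) struct \<Rightarrow> nat \<Rightarrow> ('a list, 'r, 'f) struct" where
  "power A n = \<lparr> carrier = tuples (carrier A) n,
      rar = rar A,
      rel_of = (\<lambda>R. {ts. length ts = rar A R \<and> (\<forall>t\<in>set ts. t \<in> tuples (carrier A) n) \<and>
                        (\<forall>i<n. map (\<lambda>t. t ! i) ts \<in> rel_of A R)}),
      far = far A,
      fun_of = (\<lambda>F ts. map (\<lambda>i. fun_of A F (map (\<lambda>t. t ! i) ts)) [0..<n]) \<rparr>"

definition hom :: "('a, 'r, 'f) struct \<Rightarrow> ('b, 'r, 'f) struct \<Rightarrow> ('a \<Rightarrow> 'b) \<Rightarrow> bool" where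
  "hom A B h \<longleftrightarrow>
     (\<forall>x \<in> carrier A. h x \<in> carrier B) \<and>
     (\<forall>R. \<forall>xs \<in> rel_of A R. map h xs \<in> rel_of B R) \<and>
     (\<forall>F. \<forall>xs \<in> tuples (carrier A) (far A F). h (fun_of A F xs) = fun_of B F (map h xs))"

text \<open>An n-ary operation on S is a pair (n, f), f normalised to be undefined
  outside S^n, so that equality of operations is extensional on S^n.\<close>
type_synonym 'a operation = "nat \<times> ('a list \<Rightarrow> 'a)"

definition ops_n :: "'a set \<Rightarrow> nat \<Rightarrow> 'a operation set" where
  "ops_n S n = {(n, f) | f. (\<forall>xs \<in> tuples S n. f xs \<in> S) \<and>
                            (\<forall>xs. xs \<notin> tuples S n \<longrightarrow> f xs = undefined)}"

definition ops :: "'a set \<Rightarrow> 'a operation set" where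
  "ops S = (\<Union>n\<in>{1..}. ops_n S n)"

definition restrict_op :: "'a set \<Rightarrow> nat \<Rightarrow> ('a list \<Rightarrow> 'a) \<Rightarrow> 'a operation" where
  "restrict_op S n f = (n, \<lambda>xs. if xs \<in> tuples S n then f xs else undefined)"

text \<open>Projection e_(i+1)^n (0-indexed coordinate i).\<close>
definition proj :: "'a set \<Rightarrow> nat \<Rightarrow> nat \<Rightarrow> 'a operation" where
  "proj S n i = restrict_op S n (\<lambda>xs. xs ! i)"

definition compose :: "'a set \<Rightarrow> 'a operation \<Rightarrow> 'a operation list \<Rightarrow> nat \<Rightarrow> 'a operation" where
  "compose S f gs m = restrict_op S m (\<lambda>xs. snd f (map (\<lambda>g. snd g xs) gs))"

definition is_clone :: "'a set \<Rightarrow> 'a operation set \<Rightarrow> bool" where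
  "is_clone S C \<longleftrightarrow> C \<subseteq> ops S \<and>
     (\<forall>n i. 1 \<le> n \<longrightarrow> i < n \<longrightarrow> proj S n i \<in> C) \<and>
     (\<forall>f gs m. f \<in> C \<longrightarrow> length gs = fst f \<longrightarrow> set gs \<subseteq> C \<longrightarrow>
        (\<forall>g \<in> set gs. fst g = m) \<longrightarrow> compose S f gs m \<in> C)"

definition clone_gen :: "'a set \<Rightarrow> 'a operation set \<Rightarrow> 'a operation set" where
  "clone_gen S M = \<Inter>{C. is_clone S C \<and> M \<subseteq> C}"

definition Pol :: "('a, 'r, 'f) struct \<Rightarrow> 'a operation set" where
  "Pol A = {(n, f) \<in> ops (carrier A). hom (power A n) A f}"

definition End :: "('a, 'r, 'f) struct \<Rightarrow> 'a operation set" where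
  "End A = {p \<in> Pol A. fst p = 1}"

text \<open>Relative rank; infinite cardinals are collapsed to \<infinity>.\<close>
definition rel_rank :: "'a set \<Rightarrow> 'a operation set \<Rightarrow> 'a operation set \<Rightarrow> enat" where
  "rel_rank S F M =
     (if \<exists>N. N \<subseteq> F \<and> finite N \<and> clone_gen S (M \<union> N) = F
      then enat (LEAST k. \<exists>N. N \<subseteq> F \<and> finite N \<and> card N = k \<and> clone_gen S (M \<union> N) = F)
      else \<infinity>)"

end

theory Submission
  imports Defs
begin

text \<open>Every polymorphism of arity \<open>n + 2\<close> factors through a polymorphism of arity \<open>n + 1\<close>:
  its first two arguments are packed into one by the section \<open>\<epsilon>\<close> and unpacked again by \<open>r\<close>.
  By induction on the arity, \<open>End \<A> \<union> {\<epsilon>}\<close> therefore generates \<open>Pol \<A>\<close>.  Conversely, the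
  essentially unary operations form a clone containing \<open>End \<A>\<close>, but \<open>\<epsilon>\<close> is injective on
  \<open>A\<^sup>2\<close> and \<open>|A| \<ge> 2\<close>, so \<open>\<epsilon>\<close> depends on both of its arguments.\<close>

lemma power_simps [simp]:
  "carrier (power A n) = tuples (carrier A) n"
  "rar (power A n) = rar A"
  "far (power A n) = far A"
  "rel_of (power A n) R = {ts. length ts = rar A R \<and> (\<forall>t\<in>set ts. t \<in> tuples (carrier A) n) \<and>
                        (\<forall>i<n. map (\<lambda>t. t ! i) ts \<in> rel_of A R)}"
  "fun_of (power A n) F ts = map (\<lambda>i. fun_of A F (map (\<lambda>t. t ! i) ts)) [0..<n]"
  by (simp_all add: power_def)

lemma nth_in_tuples: "xs \<in> tuples S n \<Longrightarrow> i < n \<Longrightarrow> xs ! i \<in> S"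
  by (auto simp: tuples_def)

lemma column_in_tuples:
  assumes "ts \<in> tuples (tuples S n) k" "i < n"
  shows "map (\<lambda>t. t ! i) ts \<in> tuples S k"
proof -
  have "t ! i \<in> S" if "t \<in> set ts" for t
  proof -
    have "t \<in> tuples S n" using that assms(1) by (auto simp: tuples_def)
    then show ?thesis using assms(2) by (rule nth_in_tuples)
  qed
  then show ?thesis using assms by (auto simp: tuples_def)
qed

lemma power_fun_of_in_carrier:
  assumes "wf_struct A" "ts \<in> tuples (tuples (carrier A) n) (far A F)"
  shows "fun_of (power A n) F ts \<in> tuples (carrier A) n"
proof -
  have "\<forall>i<n. fun_of A F (map (\<lambda>t. t ! i) ts) \<in> carrier A"
    using assms column_in_tuples unfolding wf_struct_def by blast
  then show ?thesis by (auto simp: tuples_def)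
qed

lemma hom_comp:
  assumes g: "hom A B g" and h: "hom B C h" and "far B = far A"
  shows "hom A C (\<lambda>x. h (g x))"
  unfolding hom_def
proof (intro conjI ballI allI)
  fix x assume "x \<in> carrier A"
  then show "h (g x) \<in> carrier C" using g h by (auto simp: hom_def)
next
  fix R xs assume "xs \<in> rel_of A R"
  then have "map h (map g xs) \<in> rel_of C R" using g h unfolding hom_def by blast
  then show "map (\<lambda>x. h (g x)) xs \<in> rel_of C R" by (simp add: o_def)
next
  fix F xs assume xs: "xs \<in> tuples (carrier A) (far A F)"
  then have gxs: "map g xs \<in> tuples (carrier B) (far B F)"
    using g \<open>far B = far A\<close> unfolding hom_def tuples_def by auto
  have "h (g (fun_of A F xs)) = h (fun_of B F (map g xs))" using g xs by (auto simp: hom_def)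
  also have "\<dots> = fun_of C F (map h (map g xs))" using h gxs by (auto simp: hom_def)
  finally show "h (g (fun_of A F xs)) = fun_of C F (map (\<lambda>x. h (g x)) xs)" by (simp add: o_def)
qed

lemma hom_power_cong:
  assumes "wf_struct A" "\<And>x. x \<in> tuples (carrier A) n \<Longrightarrow> h x = h' x" "hom (power A n) B h"
  shows "hom (power A n) B h'"
  unfolding hom_def
proof (intro conjI ballI allI)
  fix x assume "x \<in> carrier (power A n)"
  then show "h' x \<in> carrier B" using assms(2,3) by (auto simp: hom_def)
next
  fix R xs assume xs: "xs \<in> rel_of (power A n) R"
  then have "map h xs = map h' xs" using assms(2) by (auto intro!: map_cong)
  moreover have "map h xs \<in> rel_of B R" using xs assms(3) unfolding hom_def by blast
  ultimately show "map h' xs \<in> rel_of B R" by metis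
next
  fix F xs assume xs: "xs \<in> tuples (carrier (power A n)) (far (power A n) F)"
  then have xs': "xs \<in> tuples (tuples (carrier A) n) (far A F)" by simp
  then have "map h xs = map h' xs" using assms(2) by (auto simp: tuples_def intro!: map_cong)
  moreover have "h (fun_of (power A n) F xs) = h' (fun_of (power A n) F xs)"
    using power_fun_of_in_carrier[OF assms(1) xs'] assms(2) by blast
  moreover have "h (fun_of (power A n) F xs) = fun_of B F (map h xs)"
    using assms(3) xs unfolding hom_def by blast
  ultimately show "h' (fun_of (power A n) F xs) = fun_of B F (map h' xs)" by metis
qed

lemma hom_power_nth: "i < n \<Longrightarrow> hom (power A n) A (\<lambda>t. t ! i)"
  unfolding hom_def by (auto simp: tuples_def)

lemma hom_to_powerI:
  assumes wf: "wf_struct A"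
    and car: "\<And>x. x \<in> tuples (carrier A) n \<Longrightarrow> h x \<in> tuples (carrier A) m"
    and coord: "\<And>i. i < m \<Longrightarrow> hom (power A n) A (\<lambda>x. h x ! i)"
  shows "hom (power A n) (power A m) h"
  unfolding hom_def
proof (intro conjI ballI allI)
  fix x assume "x \<in> carrier (power A n)"
  then show "h x \<in> carrier (power A m)" using car by simp
next
  fix R xs assume xs: "xs \<in> rel_of (power A n) R"
  have "map (\<lambda>t. t ! i) (map h xs) \<in> rel_of A R" if "i < m" for i
    using coord[OF that] xs unfolding hom_def by (simp add: o_def)
  then show "map h xs \<in> rel_of (power A m) R" using xs car by auto
next
  fix F xs assume xs: "xs \<in> tuples (carrier (power A n)) (far (power A n) F)"
  then have hx: "h (fun_of (power A n) F xs) \<in> tuples (carrier A) m"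
    using car power_fun_of_in_carrier[OF wf] by simp
  show "h (fun_of (power A n) F xs) = fun_of (power A m) F (map h xs)"
  proof (rule nth_equalityI)
    show "length (h (fun_of (power A n) F xs)) = length (fun_of (power A m) F (map h xs))"
      using hx by (simp add: tuples_def)
    fix i assume "i < length (h (fun_of (power A n) F xs))"
    then have i: "i < m" using hx by (simp add: tuples_def)
    have "h (fun_of (power A n) F xs) ! i = fun_of A F (map (\<lambda>x. h x ! i) xs)"
      using coord[OF i] xs unfolding hom_def by blast
    then show "h (fun_of (power A n) F xs) ! i = fun_of (power A m) F (map h xs) ! i"
      using i by (simp add: o_def)
  qed
qed

lemma hom_unfold_head:
  assumes wf: "wf_struct A" and r: "hom A (power A m) r"
  shows "hom (power A (Suc n)) (power A (m + n)) (\<lambda>ys. r (hd ys) @ tl ys)"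
proof (rule hom_to_powerI[OF wf])
  fix ys assume "ys \<in> tuples (carrier A) (Suc n)"
  then obtain y zs where "ys = y # zs" "y \<in> carrier A" "zs \<in> tuples (carrier A) n"
    by (cases ys) (auto simp: tuples_def)
  then show "r (hd ys) @ tl ys \<in> tuples (carrier A) (m + n)"
    using r by (auto simp: hom_def tuples_def)
next
  fix i assume i: "i < m + n"
  have unfold_nth: "(r (hd ys) @ tl ys) ! i = (if i < m then r (ys ! 0) ! i else ys ! (i - m + 1))"
    if ys: "ys \<in> tuples (carrier A) (Suc n)" for ys
  proof -
    obtain y zs where "ys = y # zs" "y \<in> carrier A"
      using ys by (cases ys) (auto simp: tuples_def)
    then show ?thesis using r by (auto simp: hom_def tuples_def nth_append)
  qed
  show "hom (power A (Suc n)) A (\<lambda>ys. (r (hd ys) @ tl ys) ! i)"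
  proof (cases "i < m")
    case True
    have "hom (power A (Suc n)) (power A m) (\<lambda>ys. r (ys ! 0))"
      by (rule hom_comp[OF hom_power_nth r]) simp_all
    then have "hom (power A (Suc n)) A (\<lambda>ys. r (ys ! 0) ! i)"
      by (rule hom_comp[OF _ hom_power_nth]) (simp_all add: True)
    then show ?thesis by (rule hom_power_cong[OF wf, rotated]) (simp add: unfold_nth True)
  next
    case False
    have "hom (power A (Suc n)) A (\<lambda>ys. ys ! (i - m + 1))"
      by (rule hom_power_nth) (use i False in arith)
    then show ?thesis by (rule hom_power_cong[OF wf, rotated]) (simp add: unfold_nth False)
  qed
qed

lemma ops_iff: "p \<in> ops S \<longleftrightarrow> fst p \<ge> 1 \<and> (\<forall>xs\<in>tuples S (fst p). snd p xs \<in> S) \<and>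
   (\<forall>xs. xs \<notin> tuples S (fst p) \<longrightarrow> snd p xs = undefined)"
  by (cases p) (auto simp: ops_def ops_n_def)

lemma Pol_iff: "p \<in> Pol A \<longleftrightarrow> p \<in> ops (carrier A) \<and> hom (power A (fst p)) A (snd p)"
  by (cases p) (simp add: Pol_def)

lemma fst_restrict_op [simp]: "fst (restrict_op S n f) = n"
  by (simp add: restrict_op_def)

lemma snd_restrict_op [simp]: "xs \<in> tuples S n \<Longrightarrow> snd (restrict_op S n f) xs = f xs"
  by (simp add: restrict_op_def)

lemma fst_proj [simp]: "fst (proj S n i) = n"
  by (simp add: proj_def)

lemma restrict_op_in_ops:
  assumes "n \<ge> 1" "\<And>xs. xs \<in> tuples S n \<Longrightarrow> f xs \<in> S"
  shows "restrict_op S n f \<in> ops S"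
  using assms by (simp add: ops_iff restrict_op_def)

lemma restrict_op_eqI:
  assumes "p \<in> ops S" "\<And>xs. xs \<in> tuples S (fst p) \<Longrightarrow> h xs = snd p xs"
  shows "restrict_op S (fst p) h = p"
  using assms by (cases p) (auto simp: restrict_op_def ops_iff fun_eq_iff)

lemma restrict_op_in_Pol:
  assumes wf: "wf_struct A" and "n \<ge> 1" and h: "hom (power A n) A f"
  shows "restrict_op (carrier A) n f \<in> Pol A"
proof -
  have "restrict_op (carrier A) n f \<in> ops (carrier A)"
    using h \<open>n \<ge> 1\<close> by (intro restrict_op_in_ops) (auto simp: hom_def)
  moreover have "hom (power A n) A (snd (restrict_op (carrier A) n f))"
    by (rule hom_power_cong[OF wf _ h]) simp
  ultimately show ?thesis by (simp add: Pol_iff)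
qed

lemma Pol_is_clone:
  assumes wf: "wf_struct A"
  shows "is_clone (carrier A) (Pol A)"
  unfolding is_clone_def
proof (intro conjI allI impI)
  show "Pol A \<subseteq> ops (carrier A)" by (auto simp: Pol_iff)
next
  fix n i :: nat assume "1 \<le> n" "i < n"
  then show "proj (carrier A) n i \<in> Pol A"
    unfolding proj_def by (intro restrict_op_in_Pol[OF wf] hom_power_nth)
next
  fix f gs m
  assume f: "f \<in> Pol A" and len: "length gs = fst f" and gs: "set gs \<subseteq> Pol A"
    and ar: "\<forall>g\<in>set gs. fst g = m"
  have "fst f \<ge> 1" using f by (simp add: Pol_iff ops_iff)
  then have "hd gs \<in> set gs" using len by (cases gs) auto
  then have "m \<ge> 1" using gs ar by (auto simp: Pol_iff ops_iff)
  define H where "H xs = map (\<lambda>g. snd g xs) gs" for xs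
  have "hom (power A m) (power A (fst f)) H"
  proof (rule hom_to_powerI[OF wf])
    fix x assume "x \<in> tuples (carrier A) m"
    then have "snd g x \<in> carrier A" if "g \<in> set gs" for g
      using that gs ar by (auto simp: Pol_iff ops_iff)
    then show "H x \<in> tuples (carrier A) (fst f)"
      using len by (auto simp: H_def tuples_def)
  next
    fix i assume "i < fst f"
    then have "gs ! i \<in> Pol A" "fst (gs ! i) = m" using gs ar len nth_mem by auto
    then show "hom (power A m) A (\<lambda>x. H x ! i)"
      using \<open>i < fst f\<close> len by (simp add: H_def Pol_iff)
  qed
  then have "hom (power A m) A (\<lambda>x. snd f (H x))"
    by (rule hom_comp) (use f in \<open>simp_all add: Pol_iff\<close>)
  then show "compose (carrier A) f gs m \<in> Pol A"
    unfolding compose_def H_def[symmetric] using restrict_op_in_Pol[OF wf \<open>m \<ge> 1\<close>] by blast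
qed

lemma clone_proj: "is_clone S C \<Longrightarrow> i < n \<Longrightarrow> proj S n i \<in> C"
  unfolding is_clone_def by simp

lemma clone_compose:
  "is_clone S C \<Longrightarrow> f \<in> C \<Longrightarrow> length gs = fst f \<Longrightarrow> set gs \<subseteq> C \<Longrightarrow> \<forall>g\<in>set gs. fst g = m
    \<Longrightarrow> compose S f gs m \<in> C"
  unfolding is_clone_def by blast

lemma clone_gen_subset: "is_clone S C \<Longrightarrow> M \<subseteq> C \<Longrightarrow> clone_gen S M \<subseteq> C"
  unfolding clone_gen_def by blast

definition ess_unary :: "'a set \<Rightarrow> 'a operation set" where
  "ess_unary S = {p \<in> ops S. \<exists>i<fst p. \<exists>g. \<forall>xs\<in>tuples S (fst p). snd p xs = g (xs ! i)}"

lemma ess_unaryI: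
  "p \<in> ops S \<Longrightarrow> i < fst p \<Longrightarrow> (\<And>xs. xs \<in> tuples S (fst p) \<Longrightarrow> snd p xs = g (xs ! i))
    \<Longrightarrow> p \<in> ess_unary S"
  unfolding ess_unary_def by blast

lemma ess_unary_is_clone: "is_clone S (ess_unary S)"
  unfolding is_clone_def
proof (intro conjI allI impI)
  show "ess_unary S \<subseteq> ops S" by (auto simp: ess_unary_def)
next
  fix n i :: nat assume "1 \<le> n" "i < n"
  then show "proj S n i \<in> ess_unary S"
    unfolding proj_def
    by (intro ess_unaryI[where g = id and i = i] restrict_op_in_ops) (auto intro: nth_in_tuples)
next
  fix f gs m
  assume f: "f \<in> ess_unary S" and len: "length gs = fst f" and gs: "set gs \<subseteq> ess_unary S"
    and ar: "\<forall>g\<in>set gs. fst g = m"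
  from f obtain i g where i: "i < fst f" and fg: "\<forall>xs\<in>tuples S (fst f). snd f xs = g (xs ! i)"
    and fo: "f \<in> ops S"
    by (auto simp: ess_unary_def)
  have "gs ! i \<in> ess_unary S" "fst (gs ! i) = m" using i len gs ar nth_mem by auto
  then obtain j g' where j: "j < m" and g': "\<forall>xs\<in>tuples S m. snd (gs ! i) xs = g' (xs ! j)"
    by (auto simp: ess_unary_def)
  have args: "map (\<lambda>g. snd g xs) gs \<in> tuples S (fst f)" if xs: "xs \<in> tuples S m" for xs
  proof -
    have "snd g xs \<in> S" if "g \<in> set gs" for g
      using that xs gs ar by (auto simp: ess_unary_def ops_iff)
    then show ?thesis using len by (auto simp: tuples_def)
  qed
  show "compose S f gs m \<in> ess_unary S"
    unfolding compose_def
  proof (rule ess_unaryI[where g = "g \<circ> g'" and i = j])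
    show "restrict_op S m (\<lambda>xs. snd f (map (\<lambda>g. snd g xs) gs)) \<in> ops S"
      using j fo args by (intro restrict_op_in_ops) (auto simp: ops_iff)
  qed (use j fg g' args i len in auto)
qed

lemma unary_op_ess_unary: "p \<in> ops S \<Longrightarrow> fst p = 1 \<Longrightarrow> p \<in> ess_unary S"
  by (rule ess_unaryI[where i = 0 and g = "\<lambda>x. snd p [x]"])
    (auto simp: tuples_def length_Suc_conv)

lemma End_subset_ess_unary: "End A \<subseteq> ess_unary (carrier A)"
  by (auto simp: End_def Pol_iff intro: unary_op_ess_unary)

lemma injective_binary_not_ess_unary:
  assumes "inj_on e (tuples S 2)" "a \<in> S" "b \<in> S" "a \<noteq> b"
  shows "restrict_op S 2 e \<notin> ess_unary S"
proof
  assume "restrict_op S 2 e \<in> ess_unary S"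
  then obtain i g where "i < 2" and g: "\<forall>xs\<in>tuples S 2. e xs = g (xs ! i)"
    by (auto simp: ess_unary_def)
  moreover have pairs: "[a, a] \<in> tuples S 2" "[a, b] \<in> tuples S 2" "[b, a] \<in> tuples S 2"
    using assms by (auto simp: tuples_def)
  ultimately have "e [a, a] = e [a, b] \<or> e [a, a] = e [b, a]"
    by (auto simp: less_2_cases_iff)
  then show False using assms pairs by (auto dest: inj_onD)
qed

lemma clone_gen_End_ne_Pol_if_injective_binary:
  assumes wf: "wf_struct A" and e: "hom (power A 2) A e" and "inj_on e (tuples (carrier A) 2)"
    and "a \<in> carrier A" "b \<in> carrier A" "a \<noteq> b"
  shows "clone_gen (carrier A) (End A) \<noteq> Pol A"
proof
  assume "clone_gen (carrier A) (End A) = Pol A"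
  moreover have "clone_gen (carrier A) (End A) \<subseteq> ess_unary (carrier A)"
    by (rule clone_gen_subset[OF ess_unary_is_clone End_subset_ess_unary])
  moreover have "restrict_op (carrier A) 2 e \<in> Pol A"
    by (rule restrict_op_in_Pol[OF wf _ e]) simp
  moreover have "restrict_op (carrier A) 2 e \<notin> ess_unary (carrier A)"
    using assms(3-) by (rule injective_binary_not_ess_unary)
  ultimately show False by blast
qed

lemma map_nth_upt_length: "map ((!) xs) [k..<length xs] = drop k xs"
  by (metis add_0 drop_map drop_upt map_nth)

text \<open>The decomposition \<open>f = f' \<circ> \<langle>\<epsilon>(x\<^sub>0, x\<^sub>1), x\<^sub>2, \<dots>\<rangle>\<close> with \<open>f'(y, x\<^sub>2, \<dots>) = f(r(y), x\<^sub>2, \<dots>)\<close>.\<close>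

lemma compose_section_unfold_head:
  fixes S :: "'a set" and n :: nat
  defines "m \<equiv> Suc (Suc n)"
  assumes f: "(m, f) \<in> ops S"
    and e: "\<And>p. p \<in> tuples S 2 \<Longrightarrow> e p \<in> S"
    and re: "\<And>p. p \<in> tuples S 2 \<Longrightarrow> r (e p) = p"
  shows "compose S (restrict_op S (Suc n) (\<lambda>ys. f (r (hd ys) @ tl ys)))
           (compose S (restrict_op S 2 e) [proj S m 0, proj S m 1] m # map (proj S m) [2..<m]) m
         = (m, f)"
    (is "compose S ?f' ?gs m = _")
proof -
  have "restrict_op S (fst (m, f)) (\<lambda>xs. snd ?f' (map (\<lambda>g. snd g xs) ?gs)) = (m, f)"
  proof (rule restrict_op_eqI[OF f])
    fix xs assume "xs \<in> tuples S (fst (m, f))"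
    then obtain a b zs where xs: "xs = a # b # zs" "a \<in> S" "b \<in> S" "zs \<in> tuples S n"
      by (auto simp: m_def tuples_def length_Suc_conv)
    then have ab: "[a, b] \<in> tuples S 2" by (simp add: tuples_def)
    have "map (\<lambda>g. snd g xs) (map (proj S m) [2..<m]) = drop 2 xs"
      using xs map_nth_upt_length[of xs 2] by (simp add: proj_def tuples_def m_def o_def)
    then have "map (\<lambda>g. snd g xs) ?gs = e [a, b] # zs"
      using xs ab by (simp add: compose_def proj_def m_def tuples_def)
    then show "snd ?f' (map (\<lambda>g. snd g xs) ?gs) = snd (m, f) xs"
      using xs ab e re by (simp add: tuples_def)
  qed
  then show ?thesis by (simp add: compose_def)
qed

lemma Pol_subset_clone_with_section:
  assumes wf: "wf_struct A" and r: "hom A (power A 2) r"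
    and e: "hom (power A 2) A e" and re: "\<forall>p \<in> tuples (carrier A) 2. r (e p) = p"
    and C: "is_clone (carrier A) C" and End: "End A \<subseteq> C"
    and eC: "restrict_op (carrier A) 2 e \<in> C"
  shows "Pol A \<subseteq> C"
proof
  let ?S = "carrier A"
  have Pol_in_C: "(Suc k, f) \<in> C" if "(Suc k, f) \<in> Pol A" for k f
    using that
  proof (induction k arbitrary: f)
    case 0
    then show ?case using End by (auto simp: End_def)
  next
    case (Suc n)
    let ?m = "Suc (Suc n)"
    define f' where "f' = restrict_op ?S (Suc n) (\<lambda>ys. f (r (hd ys) @ tl ys))"
    have "hom (power A (Suc n)) A (\<lambda>ys. f (r (hd ys) @ tl ys))"
      by (rule hom_comp[OF hom_unfold_head[OF wf r]]) (use Suc.prems in \<open>simp_all add: Pol_iff\<close>)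
    then have "f' \<in> Pol A" unfolding f'_def by (rule restrict_op_in_Pol[OF wf, rotated]) simp
    then have f'C: "f' \<in> C" using Suc.IH[of "snd f'"] by (simp add: f'_def restrict_op_def)
    define ce where "ce = compose ?S (restrict_op ?S 2 e) [proj ?S ?m 0, proj ?S ?m 1] ?m"
    have "ce \<in> C" unfolding ce_def
      by (rule clone_compose[OF C eC]) (auto intro: clone_proj[OF C])
    moreover have "set (map (proj ?S ?m) [2..<?m]) \<subseteq> C"
      using clone_proj[OF C] by (auto simp del: upt_Suc)
    ultimately have "compose ?S f' (ce # map (proj ?S ?m) [2..<?m]) ?m \<in> C"
      by (intro clone_compose[OF C f'C]) (simp_all add: f'_def ce_def compose_def del: upt_Suc)
    moreover have "compose ?S f' (ce # map (proj ?S ?m) [2..<?m]) ?m = (?m, f)"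
      unfolding f'_def ce_def
      by (rule compose_section_unfold_head) (use Suc.prems e re in \<open>auto simp: Pol_iff hom_def\<close>)
    ultimately show ?case by simp
  qed
  fix p assume "p \<in> Pol A"
  moreover obtain k f where "p = (Suc k, f)"
    using \<open>p \<in> Pol A\<close> by (cases p) (auto simp: Pol_iff ops_iff dest: Suc_le_D)
  ultimately show "p \<in> C" using Pol_in_C by blast
qed

lemma clone_gen_End_section_eq_Pol:
  assumes wf: "wf_struct A" and r: "hom A (power A 2) r"
    and e: "hom (power A 2) A e" and re: "\<forall>p \<in> tuples (carrier A) 2. r (e p) = p"
  shows "clone_gen (carrier A) (End A \<union> {restrict_op (carrier A) 2 e}) = Pol A"
proof
  have "restrict_op (carrier A) 2 e \<in> Pol A" by (rule restrict_op_in_Pol[OF wf _ e]) simp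
  then show "clone_gen (carrier A) (End A \<union> {restrict_op (carrier A) 2 e}) \<subseteq> Pol A"
    by (intro clone_gen_subset[OF Pol_is_clone[OF wf]]) (auto simp: End_def)
  show "Pol A \<subseteq> clone_gen (carrier A) (End A \<union> {restrict_op (carrier A) 2 e})"
    unfolding clone_gen_def using Pol_subset_clone_with_section[OF wf r e re] by blast
qed

lemma rel_rank_eq_1I:
  assumes "g \<in> F" "clone_gen S (M \<union> {g}) = F" "clone_gen S M \<noteq> F"
  shows "rel_rank S F M = 1"
proof -
  let ?gen = "\<lambda>k. \<exists>N. N \<subseteq> F \<and> finite N \<and> card N = k \<and> clone_gen S (M \<union> N) = F"
  have "?gen 1" using assms(1,2) by (intro exI[of _ "{g}"]) auto
  moreover have "1 \<le> k" if "?gen k" for k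
    using that assms(3) by (cases "k = 0") auto
  ultimately have "(LEAST k. ?gen k) = 1" by (rule Least_equality)
  with \<open>?gen 1\<close> show ?thesis unfolding rel_rank_def by (auto simp: one_enat_def)
qed

theorem proposition5p2:
  fixes A :: "('a, 'r, 'f) struct" and r :: "'a \<Rightarrow> 'a list"
  assumes "wf_struct A"
    and "\<exists>a \<in> carrier A. \<exists>b \<in> carrier A. a \<noteq> b"
    and "hom A (power A 2) r"
    and "\<exists>e. hom (power A 2) A e \<and> (\<forall>p \<in> carrier (power A 2). r (e p) = p)"
  shows "rel_rank (carrier A) (Pol A) (End A) = 1
    \<and> (\<forall>e. hom (power A 2) A e \<and> (\<forall>p \<in> carrier (power A 2). r (e p) = p) \<longrightarrow>
          clone_gen (carrier A) (End A \<union> {restrict_op (carrier A) 2 e}) = Pol A)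
    \<and> clone_gen (carrier A) (End A) \<noteq> Pol A"
proof -
  obtain a b where ab: "a \<in> carrier A" "b \<in> carrier A" "a \<noteq> b" using assms(2) by blast
  obtain e where e: "hom (power A 2) A e" and re: "\<forall>p \<in> tuples (carrier A) 2. r (e p) = p"
    using assms(4) by auto
  have gen: "clone_gen (carrier A) (End A \<union> {restrict_op (carrier A) 2 e'}) = Pol A"
    if "hom (power A 2) A e'" "\<forall>p \<in> carrier (power A 2). r (e' p) = p" for e'
    using clone_gen_End_section_eq_Pol[OF assms(1,3)] that by simp
  have "inj_on e (tuples (carrier A) 2)" using re by (metis inj_onI)
  then have ne: "clone_gen (carrier A) (End A) \<noteq> Pol A"
    using clone_gen_End_ne_Pol_if_injective_binary[OF assms(1) e] ab by blast
  have "restrict_op (carrier A) 2 e \<in> Pol A" by (rule restrict_op_in_Pol[OF assms(1) _ e]) simp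
  then have "rel_rank (carrier A) (Pol A) (End A) = 1"
    by (rule rel_rank_eq_1I[OF _ gen ne]) (use e re in simp_all)
  with gen ne show ?thesis by blast
qed

end
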